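(* Let $(\mathcal S,\mathcal Q,\Theta)$ be a Pufferfish scenario, $(\mathcal U,\omega)$ a (continuous or finite) slice profile, $\alpha>1$, $\epsilon\ge0$, $f:\mathcal X\to\mathbb R^d$ a query, and $\mathcal M(X)=f(X)+N$ with $N\sim\zeta$ independent of $X$. (i) If $\mathtt{AR}^\infty_{\alpha,\omega}(\mathcal M^\theta_{s_i}\|\mathcal M^\theta_{s_j})\le\epsilon$ for all $\theta\in\Theta$ and all $(s_i,s_j)\in\mathcal Q$ with $P^S_\theta(s_i),P^S_\theta(s_j)>0$, then $\mathcal M$ satisfies $(\alpha,\epsilon,\omega)$-Ave-SRPP in $(\mathcal S,\mathcal Q,\Theta)$. (ii) If $\mathtt{JR}^\infty_{\alpha,\omega}(\mathcal M^\theta_{s_i}\|\mathcal M^\theta_{s_j})\le\epsilon$ for all such $\theta$ and $(s_i,s_j)$, then $\mathcal M$ satisfies $(\alpha,\epsilon,\omega)$-Joint-SRPP in $(\mathcal S,\mathcal Q,\Theta)$.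
   Context: A Pufferfish scenario $(\mathcal S,\mathcal Q,\Theta)$: secrets $\mathcal S$, secret pairs $\mathcal Q\subseteq\mathcal S\times\mathcal S$, priors $\Theta$, each $\theta$ a joint distribution of secret $S$ and dataset $X$ with secret marginal $P^S_\theta$. $P^{f,s}_\theta$ is the law of $f(X)$ given $S=s$ under $\theta$; $\mathcal M^\theta_s$ is the law of $\mathcal M(X)$ given $S=s$ under $\theta$. A slice profile $(\mathcal U,\omega)$: $\mathcal U\subseteq\mathbb S^{d-1}$ and $\omega$ a probability measure on the unit sphere $\mathbb S^{d-1}$ supported on $\mathcal U$. $\Psi^u(a)=\langle a,u\rangle$, $\Psi^u_\#$ the pushforward. $\mathtt D_\alpha(P\|Q)=\frac1{\alpha-1}\log\mathbb E_{Q}[(dP/dQ)^\alpha]$ is R\'enyi divergence. $W_\infty(\nu,\mu)=\inf_{\pi\in\Pi(\nu,\mu)}\sup_{(x,y)\in\mathrm{supp}\,\pi}|x-y|$ for measures on $\mathbb R$. $\zeta_{-a}$ is the law of $U-a$, $U\sim\zeta$; $R_\alpha(\zeta,r)=\sup_{\|a\|_2\le r}\mathtt D_\alpha(\zeta_{-a}\|\zeta)$. With $z^u_\infty:=W_\infty(\Psi^u_\#P^{f,s_i}_\theta,\Psi^u_\#P^{f,s_j}_\theta)$, define $\mathtt{AR}^\infty_{\alpha,\omega}(\mathcal M^\theta_{s_i}\|\mathcal M^\theta_{s_j}):=\int_{\mathbb S^{d-1}}R_\alpha(\zeta,z^u_\infty)\,d\omega(u)$ and $\mathtt{JR}^\infty_{\alpha,\omega}(\mathcal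 M^\theta_{s_i}\|\mathcal M^\theta_{s_j}):=\frac1{\alpha-1}\log\int_{\mathbb S^{d-1}}\exp((\alpha-1)R_\alpha(\zeta,z^u_\infty))\,d\omega(u)$. Average sliced R\'enyi divergence: $\mathtt{AveSD}^\omega_\alpha(P\|Q)=\int\mathtt D_\alpha(\Psi^u_\#P\|\Psi^u_\#Q)\,d\omega(u)$; joint sliced R\'enyi divergence: $\mathtt{JSD}^\omega_\alpha(P\|Q)=\frac1{\alpha-1}\log\int\exp((\alpha-1)\mathtt D_\alpha(\Psi^u_\#P\|\Psi^u_\#Q))\,d\omega(u)$. $\mathcal M$ is $(\alpha,\epsilon,\omega)$-Ave-SRPP (resp. Joint-SRPP) in $(\mathcal S,\mathcal Q,\Theta)$ if $\mathtt{AveSD}^\omega_\alpha(\mathcal M^\theta_{s_i}\|\mathcal M^\theta_{s_j})\le\epsilon$ (resp. $\mathtt{JSD}^\omega_\alpha(\cdot)\le\epsilon$) for all $\theta\in\Theta$ and $(s_i,s_j)\in\mathcal Q$ with $P^S_\theta(s_i),P^S_\theta(s_j)>0$. *)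

theory Defs
  imports "HOL-Probability.Probability"
begin

text \<open>dP/dQ is RN_deriv Q P.  D_alpha(P||Q) = 1/(alpha-1) log E_Q[(dP/dQ)^alpha].\<close>

definition ln_enn :: "ennreal \<Rightarrow> ereal" where
  "ln_enn x = (if x = \<infinity> then \<infinity> else if x = 0 then -\<infinity> else ereal (ln (enn2real x)))"

definition exp_ereal :: "ereal \<Rightarrow> ennreal" where
  "exp_ereal r = (case r of ereal x \<Rightarrow> ennreal (exp x) | PInfty \<Rightarrow> \<infinity> | MInfty \<Rightarrow> 0)"

definition renyi_div :: "real \<Rightarrow> 'b measure \<Rightarrow> 'b measure \<Rightarrow> ereal" where
  "renyi_div \<alpha> P Q =
     (if absolutely_continuous Q P \<and> sets P = sets Q
      then ereal (1 / (\<alpha> - 1)) *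
             ln_enn (\<integral>\<^sup>+ x. ennreal ((enn2real (RN_deriv Q P x)) powr \<alpha>) \<partial>Q)
      else \<infinity>)"

definition slice :: "'a::euclidean_space \<Rightarrow> 'a measure \<Rightarrow> real measure" where
  "slice u P = distr P borel (\<lambda>a. inner a u)"

definition AveSD :: "real \<Rightarrow> 'a::euclidean_space measure \<Rightarrow> 'a measure \<Rightarrow> 'a measure \<Rightarrow> ereal" where
  "AveSD \<alpha> \<omega> P Q = enn2ereal (\<integral>\<^sup>+ u. e2ennreal (renyi_div \<alpha> (slice u P) (slice u Q)) \<partial>\<omega>)"

definition JSD :: "real \<Rightarrow> 'a::euclidean_space measure \<Rightarrow> 'a measure \<Rightarrow> 'a measure \<Rightarrow> ereal" where
  "JSD \<alpha> \<omega> P Q = ereal (1 / (\<alpha> - 1)) *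
     ln_enn (\<integral>\<^sup>+ u. exp_ereal (ereal (\<alpha> - 1) * renyi_div \<alpha> (slice u P) (slice u Q)) \<partial>\<omega>)"

definition msupp :: "'b::topological_space measure \<Rightarrow> 'b set" where
  "msupp \<pi> = {z. \<forall>V. open V \<and> z \<in> V \<longrightarrow> emeasure \<pi> V > 0}"

definition coupling :: "(real \<times> real) measure \<Rightarrow> real measure \<Rightarrow> real measure \<Rightarrow> bool" where
  "coupling \<pi> \<nu> \<mu> \<longleftrightarrow> prob_space \<pi> \<and> sets \<pi> = sets borel \<and>
     distr \<pi> borel fst = \<nu> \<and> distr \<pi> borel snd = \<mu>"

definition W_inf :: "real measure \<Rightarrow> real measure \<Rightarrow> ereal" where
  "W_inf \<nu> \<mu> = (INF \<pi>\<in>{\<pi>. coupling \<pi> \<nu> \<mu>}. SUP z\<in>msupp \<pi>. ereal \<bar>fst z - snd z\<bar>)"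

definition shift_meas :: "'a::euclidean_space measure \<Rightarrow> 'a \<Rightarrow> 'a measure" where
  "shift_meas \<zeta> a = distr \<zeta> borel (\<lambda>x. x - a)"

definition R_shift :: "real \<Rightarrow> 'a::euclidean_space measure \<Rightarrow> ereal \<Rightarrow> ereal" where
  "R_shift \<alpha> \<zeta> r = (SUP a\<in>{a. ereal (norm a) \<le> r}. renyi_div \<alpha> (shift_meas \<zeta> a) \<zeta>)"

text \<open>Both take the query laws P^{f,s_i}, P^{f,s_j} (on R^d) and the noise law.\<close>

definition AR_inf :: "real \<Rightarrow> 'a::euclidean_space measure \<Rightarrow> 'a measure \<Rightarrow> 'a measure \<Rightarrow> 'a measure \<Rightarrow> ereal" where
  "AR_inf \<alpha> \<omega> \<zeta> P1 P2 =
     enn2ereal (\<integral>\<^sup>+ u. e2ennreal (R_shift \<alpha> \<zeta> (W_inf (slice u P1) (slice u P2))) \<partial>\<omega>)"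

definition JR_inf :: "real \<Rightarrow> 'a::euclidean_space measure \<Rightarrow> 'a measure \<Rightarrow> 'a measure \<Rightarrow> 'a measure \<Rightarrow> ereal" where
  "JR_inf \<alpha> \<omega> \<zeta> P1 P2 = ereal (1 / (\<alpha> - 1)) *
     ln_enn (\<integral>\<^sup>+ u. exp_ereal (ereal (\<alpha> - 1) * R_shift \<alpha> \<zeta> (W_inf (slice u P1) (slice u P2))) \<partial>\<omega>)"

section \<open>Pufferfish: priors are joint laws of (secret, dataset)\<close>

definition secret_prob :: "('s \<times> 'x) measure \<Rightarrow> 's \<Rightarrow> real" where
  "secret_prob \<theta> s = measure \<theta> {p \<in> space \<theta>. fst p = s}"

definition cond_secret :: "('s \<times> 'x) measure \<Rightarrow> 's \<Rightarrow> ('s \<times> 'x) measure" where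
  "cond_secret \<theta> s = density \<theta>
     (\<lambda>p. indicator {p \<in> space \<theta>. fst p = s} p / ennreal (secret_prob \<theta> s))"

definition query_law :: "('s \<times> 'x) measure \<Rightarrow> ('x \<Rightarrow> 'a::euclidean_space) \<Rightarrow> 's \<Rightarrow> 'a measure" where
  "query_law \<theta> f s = distr (cond_secret \<theta> s) borel (\<lambda>p. f (snd p))"

definition mech_law :: "('s \<times> 'x) measure \<Rightarrow> ('x \<Rightarrow> 'a::euclidean_space) \<Rightarrow> 'a measure \<Rightarrow> 's \<Rightarrow> 'a measure" where
  "mech_law \<theta> f \<zeta> s = distr (query_law \<theta> f s \<Otimes>\<^sub>M \<zeta>) borel (\<lambda>(y, n). y + n)"

definition slice_profile :: "'a::euclidean_space set \<Rightarrow> 'a measure \<Rightarrow> bool" where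
  "slice_profile U \<omega> \<longleftrightarrow> U \<subseteq> sphere 0 1 \<and> prob_space \<omega> \<and> sets \<omega> = sets borel \<and>
     U \<in> sets borel \<and> emeasure \<omega> U = 1"

definition pufferfish_scenario :: "'s set \<Rightarrow> ('s \<times> 's) set \<Rightarrow> ('s \<times> 'x) measure set \<Rightarrow> bool" where
  "pufferfish_scenario S Q \<Theta> \<longleftrightarrow> Q \<subseteq> S \<times> S \<and>
     (\<forall>\<theta>\<in>\<Theta>. prob_space \<theta> \<and> (\<forall>s\<in>S. {p \<in> space \<theta>. fst p = s} \<in> sets \<theta>))"

definition Ave_SRPP :: "real \<Rightarrow> real \<Rightarrow> 'a::euclidean_space measure \<Rightarrow> 's set \<Rightarrow> ('s \<times> 's) set
    \<Rightarrow> ('s \<times> 'x) measure set \<Rightarrow> (('s \<times> 'x) measure \<Rightarrow> 's \<Rightarrow> 'a measure) \<Rightarrow> bool" where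
  "Ave_SRPP \<alpha> \<epsilon> \<omega> S Q \<Theta> M \<longleftrightarrow>
     (\<forall>\<theta>\<in>\<Theta>. \<forall>(si, sj)\<in>Q. secret_prob \<theta> si > 0 \<and> secret_prob \<theta> sj > 0 \<longrightarrow>
        AveSD \<alpha> \<omega> (M \<theta> si) (M \<theta> sj) \<le> ereal \<epsilon>)"

definition Joint_SRPP :: "real \<Rightarrow> real \<Rightarrow> 'a::euclidean_space measure \<Rightarrow> 's set \<Rightarrow> ('s \<times> 's) set
    \<Rightarrow> ('s \<times> 'x) measure set \<Rightarrow> (('s \<times> 'x) measure \<Rightarrow> 's \<Rightarrow> 'a measure) \<Rightarrow> bool" where
  "Joint_SRPP \<alpha> \<epsilon> \<omega> S Q \<Theta> M \<longleftrightarrow>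
     (\<forall>\<theta>\<in>\<Theta>. \<forall>(si, sj)\<in>Q. secret_prob \<theta> si > 0 \<and> secret_prob \<theta> sj > 0 \<longrightarrow>
        JSD \<alpha> \<omega> (M \<theta> si) (M \<theta> sj) \<le> ereal \<epsilon>)"

end

theory Submission
  imports Defs
begin

text \<open>
  For \<alpha> > 1 and C = exp ((\<alpha> - 1) c), the bound D_\<alpha>(P || Q) \<le> c is equivalent to the
  Young-type bound: every nonnegative g satisfies
  E_P g \<le> C / \<alpha> + (\<alpha> - 1) / \<alpha> * E_Q (g powr (\<alpha> / (\<alpha> - 1))).
  One direction is Young's inequality applied to (dP/dQ) g, the other tests g with truncations of
  (dP/dQ) powr (\<alpha> - 1).

  Along a direction u, integrating g against the slice of f(X) + N means integrating the
  noise-averaged function s \<mapsto> E g (s + \<langle>N, u\<rangle>) against the slice of f(X). Representing both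
  query slices through their quantile functions on (0, 1) couples them so that paired points are
  within W_\<infinity> of each other; passing from one paired point to the other is a shift of N by a vector
  of norm at most W_\<infinity>, for which the Young bound holds with C = exp ((\<alpha> - 1) R_\<alpha>(\<zeta>, W_\<infinity>)).
  Integrating over the levels transfers the Young bound to the slices of the mechanism, so the
  sliced divergence is at most R_\<alpha>(\<zeta>, W_\<infinity>) for \<omega>-almost every u; integrating over \<omega>
  gives both claims.
\<close>

section \<open>Variational form of the Renyi divergence\<close>

definition renyi_moment :: "real \<Rightarrow> 'b measure \<Rightarrow> 'b measure \<Rightarrow> ennreal" where
  "renyi_moment \<alpha> P Q = (\<integral>\<^sup>+ x. ennreal (enn2real (RN_deriv Q P x) powr \<alpha>) \<partial>Q)"

definition young_bound :: "real \<Rightarrow> real \<Rightarrow> 'b measure \<Rightarrow> 'b measure \<Rightarrow> bool" where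
  "young_bound \<alpha> C P Q \<longleftrightarrow> (\<forall>g \<in> borel_measurable Q. (\<forall>x. 0 \<le> g x) \<longrightarrow>
     (\<integral>\<^sup>+ x. ennreal (g x) \<partial>P) \<le> ennreal (C / \<alpha>) +
        ennreal ((\<alpha> - 1) / \<alpha>) * (\<integral>\<^sup>+ x. ennreal (g x powr (\<alpha> / (\<alpha> - 1))) \<partial>Q))"

lemma ln_enn_le_ereal_iff: "ln_enn x \<le> ereal b \<longleftrightarrow> x \<le> ennreal (exp b)"
proof (cases x rule: ennreal_cases)
  case (real r)
  then show ?thesis
    using ln_le_cancel_iff[of r "exp b"] by (cases "r = 0") (auto simp: ln_enn_def)
qed (simp add: ln_enn_def top_unique)

lemma renyi_div_le_iff_renyi_moment_le:
  assumes "\<alpha> > 1" and "sets P = sets Q"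
  shows "renyi_div \<alpha> P Q \<le> ereal c \<longleftrightarrow>
    absolutely_continuous Q P \<and> renyi_moment \<alpha> P Q \<le> ennreal (exp ((\<alpha> - 1) * c))"
proof -
  have "ereal (1 / (\<alpha> - 1)) * L \<le> ereal c \<longleftrightarrow> L \<le> ereal ((\<alpha> - 1) * c)" for L
    using assms(1) by (cases L) (auto simp: field_simps)
  then show ?thesis
    using assms(2) by (auto simp: renyi_div_def renyi_moment_def ln_enn_le_ereal_iff)
qed

lemma Youngs_inequality_conjugate:
  fixes p g \<alpha> :: real
  assumes "\<alpha> > 1" "p \<ge> 0" "g \<ge> 0"
  shows "p * g \<le> p powr \<alpha> / \<alpha> + ((\<alpha> - 1) / \<alpha>) * g powr (\<alpha> / (\<alpha> - 1))"
proof -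
  have "\<alpha> / (\<alpha> - 1) > 1" "1 / \<alpha> + 1 / (\<alpha> / (\<alpha> - 1)) = 1"
    using assms(1) by (simp_all add: field_simps)
  from Youngs_inequality[OF assms(1) this assms(2,3)] show ?thesis
    by (simp add: mult.commute)
qed

lemma nn_integral_as_RN_deriv:
  assumes "prob_space P" "prob_space Q" "sets P = sets Q" "absolutely_continuous Q P"
    and "g \<in> borel_measurable Q" "\<forall>x. 0 \<le> g x"
  shows "(\<integral>\<^sup>+ x. ennreal (g x) \<partial>P) = (\<integral>\<^sup>+ x. ennreal (enn2real (RN_deriv Q P x) * g x) \<partial>Q)"
proof -
  interpret P: prob_space P by fact
  interpret Q: prob_space Q by fact
  have "(\<integral>\<^sup>+ x. ennreal (g x) \<partial>P) = (\<integral>\<^sup>+ x. RN_deriv Q P x * ennreal (g x) \<partial>Q)"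
    using Q.RN_deriv_nn_integral[OF assms(4,3)] assms(5)
    by (simp add: measurable_cong_sets[OF assms(3)])
  also have "\<dots> = (\<integral>\<^sup>+ x. ennreal (enn2real (RN_deriv Q P x) * g x) \<partial>Q)"
    using Q.RN_deriv_finite[OF P.sigma_finite_measure_axioms assms(4,3)]
    by (intro nn_integral_cong_AE)
      (auto elim!: eventually_mono simp: ennreal_mult assms(6) less_top)
  finally show ?thesis .
qed

lemma young_bound_if_renyi_moment_le:
  assumes \<alpha>: "\<alpha> > 1" and "prob_space P" "prob_space Q" "sets P = sets Q"
    and ac: "absolutely_continuous Q P" and moment: "renyi_moment \<alpha> P Q \<le> ennreal C" and "C \<ge> 0"
  shows "young_bound \<alpha> C P Q"
  unfolding young_bound_def
proof (intro ballI impI)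
  fix g :: "_ \<Rightarrow> real" assume g: "g \<in> borel_measurable Q" "\<forall>x. 0 \<le> g x"
  let ?r = "\<lambda>x. enn2real (RN_deriv Q P x)" and ?\<beta> = "\<alpha> / (\<alpha> - 1)"
  have "(\<integral>\<^sup>+ x. ennreal (g x) \<partial>P) = (\<integral>\<^sup>+ x. ennreal (?r x * g x) \<partial>Q)"
    by (rule nn_integral_as_RN_deriv[OF assms(2-4) ac g])
  also have "\<dots> \<le> (\<integral>\<^sup>+ x. ennreal (1 / \<alpha>) * ennreal (?r x powr \<alpha>) +
      ennreal ((\<alpha> - 1) / \<alpha>) * ennreal (g x powr ?\<beta>) \<partial>Q)"
    using Youngs_inequality_conjugate[OF \<alpha> enn2real_nonneg g(2)[rule_format]] \<alpha>
    by (intro nn_integral_mono)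
      (simp add: ennreal_plus[symmetric] ennreal_mult[symmetric] del: ennreal_plus)
  also have "\<dots> = ennreal (1 / \<alpha>) * renyi_moment \<alpha> P Q +
      ennreal ((\<alpha> - 1) / \<alpha>) * (\<integral>\<^sup>+ x. ennreal (g x powr ?\<beta>) \<partial>Q)"
    unfolding renyi_moment_def using g(1) by (simp add: nn_integral_add nn_integral_cmult)
  also have "\<dots> \<le> ennreal (C / \<alpha>) + ennreal ((\<alpha> - 1) / \<alpha>) * (\<integral>\<^sup>+ x. ennreal (g x powr ?\<beta>) \<partial>Q)"
  proof -
    have "ennreal (1 / \<alpha>) * renyi_moment \<alpha> P Q \<le> ennreal (1 / \<alpha>) * ennreal C"
      by (rule mult_left_mono[OF moment]) simp
    also have "\<dots> = ennreal (C / \<alpha>)"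
      using \<alpha> \<open>C \<ge> 0\<close> by (simp add: ennreal_mult[symmetric])
    finally show ?thesis
      by (rule add_right_mono)
  qed
  finally show "(\<integral>\<^sup>+ x. ennreal (g x) \<partial>P) \<le> ennreal (C / \<alpha>) +
      ennreal ((\<alpha> - 1) / \<alpha>) * (\<integral>\<^sup>+ x. ennreal (g x powr ?\<beta>) \<partial>Q)" .
qed

lemma absolutely_continuous_if_young_bound:
  assumes \<alpha>: "\<alpha> > 1" and "prob_space P" "prob_space Q" and sets: "sets P = sets Q"
    and young: "young_bound \<alpha> C P Q"
  shows "absolutely_continuous Q P"
  unfolding absolutely_continuous_def
proof
  fix A assume A: "A \<in> null_sets Q"
  interpret P: prob_space P by fact
  show "A \<in> null_sets P"
  proof (rule ccontr)
    assume "A \<notin> null_sets P"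
    then have "measure P A \<noteq> 0"
      using A sets by (auto simp: null_sets_def P.emeasure_eq_measure)
    then have pos: "measure P A > 0"
      using measure_nonneg[of P A] by linarith
    define l where "l = (max C 0 / \<alpha> + 1) / measure P A"
    have "l \<ge> 0" using pos \<alpha> by (simp add: l_def)
    \<comment> \<open>test the bound with a large multiple of the indicator of the Q-null set A\<close>
    have "(\<integral>\<^sup>+ x. ennreal (l * indicator A x) \<partial>P) \<le> ennreal (C / \<alpha>) +
        ennreal ((\<alpha> - 1) / \<alpha>) * (\<integral>\<^sup>+ x. ennreal ((l * indicator A x) powr (\<alpha> / (\<alpha> - 1))) \<partial>Q)"
      using young A \<open>l \<ge> 0\<close> unfolding young_bound_def by (auto intro!: borel_measurable_times)
    also have "(\<integral>\<^sup>+ x. ennreal ((l * indicator A x) powr (\<alpha> / (\<alpha> - 1))) \<partial>Q) =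
        (\<integral>\<^sup>+ x. ennreal (l powr (\<alpha> / (\<alpha> - 1))) * indicator A x \<partial>Q)"
      by (intro nn_integral_cong) (auto simp: indicator_def)
    also have "\<dots> = 0"
      using A by (subst nn_integral_cmult_indicator) auto
    also have "(\<integral>\<^sup>+ x. ennreal (l * indicator A x) \<partial>P) = ennreal l * emeasure P A"
      using A sets by (subst nn_integral_cmult_indicator[symmetric])
        (auto intro!: nn_integral_cong simp: indicator_def)
    also have "\<dots> = ennreal (max C 0 / \<alpha> + 1)"
      using pos \<open>l \<ge> 0\<close> by (simp add: P.emeasure_eq_measure ennreal_mult[symmetric] l_def)
    finally have "ennreal (max C 0 / \<alpha> + 1) \<le> ennreal (C / \<alpha>)"
      by simp
    moreover have "C / \<alpha> < max C 0 / \<alpha> + 1"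
      using \<alpha> divide_right_mono[of C "max C 0" \<alpha>] by simp
    then have "ennreal (C / \<alpha>) < ennreal (max C 0 / \<alpha> + 1)"
      using \<alpha> by (intro ennreal_lessI add_nonneg_pos) auto
    ultimately show False
      by simp
  qed
qed

lemma truncated_renyi_moment_le_if_young_bound:
  assumes \<alpha>: "\<alpha> > 1" and PQ: "prob_space P" "prob_space Q" "sets P = sets Q"
    and ac: "absolutely_continuous Q P" and young: "young_bound \<alpha> C P Q" and "C \<ge> 0"
  shows "(\<integral>\<^sup>+ x. ennreal (min (enn2real (RN_deriv Q P x)) (real n) powr \<alpha>) \<partial>Q) \<le> ennreal C"
proof -
  interpret Q: prob_space Q by fact
  let ?r = "\<lambda>x. enn2real (RN_deriv Q P x)"
  define m where "m x = min (?r x) (real n)" for x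
  define g where "g x = m x powr (\<alpha> - 1)" for x
  define I where "I = (\<integral>\<^sup>+ x. ennreal (m x powr \<alpha>) \<partial>Q)"
  have "g \<in> borel_measurable Q"
    unfolding g_def m_def by measurable
  then have g: "g \<in> borel_measurable Q" "\<forall>x. 0 \<le> g x"
    by (simp_all add: g_def)
  have m_powr: "m x powr \<alpha> = m x * g x" for x
    using \<alpha> by (cases "m x = 0") (simp_all add: g_def m_def powr_diff)
  have "I \<le> (\<integral>\<^sup>+ x. ennreal (real n powr \<alpha>) \<partial>Q)"
    unfolding I_def using \<alpha> by (intro nn_integral_mono) (simp add: m_def powr_mono2)
  also have "\<dots> < \<top>"
    using Q.emeasure_space_1 by simp
  finally have "I < \<top>" .
  \<comment> \<open>testing with g = m powr (\<alpha> - 1) reproduces I on the right, with a factor below 1\<close>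
  have "I \<le> (\<integral>\<^sup>+ x. ennreal (?r x * g x) \<partial>Q)"
    unfolding I_def m_powr using g(2)
    by (intro nn_integral_mono ennreal_leI mult_right_mono) (simp_all add: m_def)
  also have "\<dots> = (\<integral>\<^sup>+ x. ennreal (g x) \<partial>P)"
    by (rule nn_integral_as_RN_deriv[OF PQ ac g, symmetric])
  also have "\<dots> \<le> ennreal (C / \<alpha>) +
      ennreal ((\<alpha> - 1) / \<alpha>) * (\<integral>\<^sup>+ x. ennreal (g x powr (\<alpha> / (\<alpha> - 1))) \<partial>Q)"
    using young g unfolding young_bound_def by blast
  also have "(\<integral>\<^sup>+ x. ennreal (g x powr (\<alpha> / (\<alpha> - 1))) \<partial>Q) = I"
    using \<alpha> by (simp add: I_def g_def m_def powr_powr)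
  finally have ineq: "I \<le> ennreal (C / \<alpha>) + ennreal ((\<alpha> - 1) / \<alpha>) * I" .
  obtain i where i: "I = ennreal i" "i \<ge> 0"
    using \<open>I < \<top>\<close> by (cases I) auto
  have "i \<le> C / \<alpha> + ((\<alpha> - 1) / \<alpha>) * i"
    using ineq \<alpha> \<open>C \<ge> 0\<close> i
    by (simp add: ennreal_mult[symmetric] ennreal_plus[symmetric] del: ennreal_plus)
  then have "i \<le> C"
    using \<alpha> by (simp add: field_simps)
  then show ?thesis
    using i by (simp add: I_def m_def)
qed

lemma renyi_moment_le_if_young_bound:
  assumes "\<alpha> > 1" "prob_space P" "prob_space Q" "sets P = sets Q"
    and "absolutely_continuous Q P" "young_bound \<alpha> C P Q" "C \<ge> 0"
  shows "renyi_moment \<alpha> P Q \<le> ennreal C"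
proof -
  let ?r = "\<lambda>x. enn2real (RN_deriv Q P x)"
  let ?m = "\<lambda>n x. ennreal (min (?r x) (real n) powr \<alpha>)"
  have mono: "incseq ?m"
    using assms(1) by (auto simp: incseq_def le_fun_def intro!: powr_mono2)
  have "ennreal (?r x powr \<alpha>) = (SUP n. ?m n x)" for x
  proof (rule antisym)
    obtain N :: nat where "?r x \<le> real N"
      using real_arch_simple by blast
    then show "ennreal (?r x powr \<alpha>) \<le> (SUP n. ?m n x)"
      by (intro SUP_upper2[of N]) simp_all
    show "(SUP n. ?m n x) \<le> ennreal (?r x powr \<alpha>)"
      using assms(1) by (intro SUP_least) (auto intro!: powr_mono2)
  qed
  then have "renyi_moment \<alpha> P Q = (\<integral>\<^sup>+ x. (SUP n. ?m n x) \<partial>Q)"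
    unfolding renyi_moment_def by simp
  also have "\<dots> = (SUP n. \<integral>\<^sup>+ x. ?m n x \<partial>Q)"
    using mono by (intro nn_integral_monotone_convergence_SUP) measurable
  also have "\<dots> \<le> ennreal C"
    using truncated_renyi_moment_le_if_young_bound[OF assms] by (intro SUP_least)
  finally show ?thesis .
qed

lemma young_bound_iff_renyi_moment_le:
  assumes "\<alpha> > 1" "prob_space P" "prob_space Q" "sets P = sets Q" "C \<ge> 0"
  shows "young_bound \<alpha> C P Q \<longleftrightarrow> absolutely_continuous Q P \<and> renyi_moment \<alpha> P Q \<le> ennreal C"
  using young_bound_if_renyi_moment_le absolutely_continuous_if_young_bound
    renyi_moment_le_if_young_bound assms by metis

lemma renyi_div_le_iff_young_bound:
  assumes "\<alpha> > 1" "prob_space P" "prob_space Q" "sets P = sets Q"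
  shows "renyi_div \<alpha> P Q \<le> ereal c \<longleftrightarrow> young_bound \<alpha> (exp ((\<alpha> - 1) * c)) P Q"
  using assms by (simp add: renyi_div_le_iff_renyi_moment_le young_bound_iff_renyi_moment_le)

section \<open>Quantile coupling and the W_\<infinity> distance\<close>

definition quantile :: "real measure \<Rightarrow> real \<Rightarrow> real" where
  "quantile \<nu> t = Inf {x. t \<le> cdf \<nu> x}"

lemma quantile_le_iff:
  assumes "real_distribution \<nu>" "0 < t" "t < 1"
  shows "quantile \<nu> t \<le> x \<longleftrightarrow> t \<le> cdf \<nu> x"
proof -
  interpret cdf_distribution \<nu>
    using assms(1) by (simp add: cdf_distribution_def)
  show ?thesis
    unfolding quantile_def by (rule pseudoinverse[OF assms(2,3), symmetric])
qed

lemma quantile_le_add_if_cdf_le_shift: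
  assumes "real_distribution \<nu>" "real_distribution \<mu>" "0 < t" "t < 1"
    and "\<And>x. cdf \<nu> x \<le> cdf \<mu> (x + w)"
  shows "quantile \<mu> t \<le> quantile \<nu> t + w"
proof -
  have "t \<le> cdf \<nu> (quantile \<nu> t)"
    using quantile_le_iff[OF assms(1,3,4), of "quantile \<nu> t"] by simp
  also have "\<dots> \<le> cdf \<mu> (quantile \<nu> t + w)"
    by (rule assms(5))
  finally show ?thesis
    using quantile_le_iff[OF assms(2,3,4)] by simp
qed

lemma distr_quantile:
  assumes "real_distribution \<nu>"
  shows "distr (restrict_space lborel {0<..<1}) borel (quantile \<nu>) = \<nu>"
    and "quantile \<nu> \<in> borel_measurable (restrict_space lborel {0<..<1})"
proof -
  interpret cdf_distribution \<nu>
    using assms by (simp add: cdf_distribution_def)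
  have q: "(\<lambda>t. Inf {x. t \<le> cdf \<nu> x}) = quantile \<nu>"
    by (simp add: quantile_def fun_eq_iff)
  show "distr (restrict_space lborel {0<..<1}) borel (quantile \<nu>) = \<nu>"
    using distr_I_eq_M unfolding q .
  show "quantile \<nu> \<in> borel_measurable (restrict_space lborel {0<..<1})"
    using measurable_CI unfolding q
    by (simp add: measurable_cong_sets[OF sets_restrict_space_cong[OF sets_lborel] refl])
qed

lemma nn_integral_quantile:
  assumes "real_distribution \<nu>" "G \<in> borel_measurable borel"
  shows "(\<integral>\<^sup>+ x. G x \<partial>\<nu>) = (\<integral>\<^sup>+ t. G (quantile \<nu> t) \<partial>restrict_space lborel {0<..<1})"
  using assms(2) by (subst (1) distr_quantile(1)[OF assms(1), symmetric])
    (simp add: nn_integral_distr[OF distr_quantile(2)[OF assms(1)]])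

lemma emeasure_eq_0_if_disjoint_msupp:
  fixes \<pi> :: "'a::second_countable_topology measure"
  assumes sets: "sets \<pi> = sets borel" and "open V" and disj: "V \<inter> msupp \<pi> = {}"
  shows "emeasure \<pi> V = 0"
proof -
  have open_sets: "U \<in> sets \<pi>" if "open U" for U
    unfolding sets using that by (rule borel_open)
  define F where "F = {W. open W \<and> W \<subseteq> V \<and> W \<in> null_sets \<pi>}"
  have "V \<subseteq> \<Union>F"
  proof
    fix z assume "z \<in> V"
    then have "z \<notin> msupp \<pi>"
      using disj by blast
    then obtain W where W: "open W" "z \<in> W" "emeasure \<pi> W = 0"
      unfolding msupp_def by auto
    then have "W \<inter> V \<in> null_sets \<pi>"
      using open_sets \<open>open V\<close> by (intro null_set_Int2) auto
    then show "z \<in> \<Union>F"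
      using W \<open>z \<in> V\<close> \<open>open V\<close> unfolding F_def by blast
  qed
  then have "V = \<Union>F"
    unfolding F_def by blast
  obtain F' where F': "F' \<subseteq> F" "countable F'" "\<Union>F' = \<Union>F"
    using Lindelof[of F] unfolding F_def by blast
  have "(\<Union>W\<in>F'. W) \<in> null_sets \<pi>"
    by (rule null_sets_UN'[OF F'(2)]) (use F' in \<open>auto simp: F_def\<close>)
  then show ?thesis
    using F'(3) \<open>V = \<Union>F\<close> by (simp add: null_sets_def)
qed

lemma AE_dist_le_if_msupp_dist_le:
  assumes sets: "sets \<pi> = sets borel" and le: "(SUP z\<in>msupp \<pi>. ereal \<bar>fst z - snd z\<bar>) \<le> ereal w"
  shows "AE z in \<pi>. \<bar>fst z - snd z\<bar> \<le> w"
proof (rule AE_I')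
  let ?V = "{z::real \<times> real. w < \<bar>fst z - snd z\<bar>}"
  have "open ?V"
    by (intro open_Collect_less continuous_intros)
  moreover have "?V \<inter> msupp \<pi> = {}"
    using le by (force simp: SUP_le_iff)
  ultimately have "emeasure \<pi> ?V = 0"
    by (rule emeasure_eq_0_if_disjoint_msupp[OF sets])
  moreover have "?V \<in> sets \<pi>"
    unfolding sets using \<open>open ?V\<close> by (rule borel_open)
  ultimately show "?V \<in> null_sets \<pi>"
    unfolding null_sets_def by blast
qed auto

lemma cdf_distr_le_if_AE_dist_le:
  fixes X Y :: "'a \<Rightarrow> real"
  assumes "prob_space \<pi>" "X \<in> borel_measurable \<pi>" "Y \<in> borel_measurable \<pi>"
    and "AE z in \<pi>. \<bar>X z - Y z\<bar> \<le> w"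
  shows "cdf (distr \<pi> borel X) x \<le> cdf (distr \<pi> borel Y) (x + w)"
proof -
  interpret prob_space \<pi> by fact
  have cdf_distr: "cdf (distr \<pi> borel V) a = measure \<pi> {z \<in> space \<pi>. V z \<le> a}"
    if "V \<in> borel_measurable \<pi>" for V :: "'a \<Rightarrow> real" and a
    using that
    by (auto simp: cdf_def measure_distr vimage_def Int_def intro!: arg_cong[where f="measure \<pi>"])
  have "measure \<pi> {z \<in> space \<pi>. X z \<le> x} \<le> measure \<pi> {z \<in> space \<pi>. Y z \<le> x + w}"
  proof (rule finite_measure_mono_AE)
    show "AE z in \<pi>. z \<in> {z \<in> space \<pi>. X z \<le> x} \<longrightarrow> z \<in> {z \<in> space \<pi>. Y z \<le> x + w}"
      using assms(4) by eventually_elim auto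
    show "{z \<in> space \<pi>. Y z \<le> x + w} \<in> sets \<pi>"
      using assms(3) by measurable
  qed
  then show ?thesis
    unfolding cdf_distr[OF assms(2)] cdf_distr[OF assms(3)] .
qed

lemma quantile_dist_le_W_inf:
  assumes \<nu>: "real_distribution \<nu>" and \<mu>: "real_distribution \<mu>" and t: "0 < t" "t < 1"
  shows "ereal \<bar>quantile \<nu> t - quantile \<mu> t\<bar> \<le> W_inf \<nu> \<mu>"
proof (rule dense_ge)
  fix y assume "W_inf \<nu> \<mu> < y"
  then show "ereal \<bar>quantile \<nu> t - quantile \<mu> t\<bar> \<le> y"
  proof (cases y)
    case (real w)
    then obtain \<pi> where c: "coupling \<pi> \<nu> \<mu>" and "(SUP z\<in>msupp \<pi>. ereal \<bar>fst z - snd z\<bar>) < ereal w"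
      using \<open>W_inf \<nu> \<mu> < y\<close> unfolding W_inf_def INF_less_iff by blast
    moreover have sets: "sets \<pi> = sets borel" and "prob_space \<pi>"
      using c by (simp_all add: coupling_def)
    ultimately have close: "AE z in \<pi>. \<bar>fst z - snd z\<bar> \<le> w"
      by (intro AE_dist_le_if_msupp_dist_le) simp_all
    then have close': "AE z in \<pi>. \<bar>snd z - fst z\<bar> \<le> w"
      by (simp add: abs_minus_commute)
    have proj: "fst \<in> borel_measurable \<pi>" "snd \<in> borel_measurable \<pi>"
      unfolding measurable_cong_sets[OF sets refl]
      by (auto intro!: borel_measurable_continuous_onI continuous_intros)
    have marginals: "distr \<pi> borel fst = \<nu>" "distr \<pi> borel snd = \<mu>"
      using c by (simp_all add: coupling_def)
    have "quantile \<mu> t \<le> quantile \<nu> t + w"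
      using cdf_distr_le_if_AE_dist_le[OF \<open>prob_space \<pi>\<close> proj close]
      by (intro quantile_le_add_if_cdf_le_shift[OF \<nu> \<mu> t]) (simp add: marginals)
    moreover have "quantile \<nu> t \<le> quantile \<mu> t + w"
      using cdf_distr_le_if_AE_dist_le[OF \<open>prob_space \<pi>\<close> proj(2,1) close']
      by (intro quantile_le_add_if_cdf_le_shift[OF \<mu> \<nu> t]) (simp add: marginals)
    ultimately show ?thesis
      using real by simp
  qed simp_all
qed

section \<open>Slices of the additive noise mechanism\<close>

definition add_noise :: "'a::euclidean_space measure \<Rightarrow> 'a measure \<Rightarrow> 'a measure" where
  "add_noise P \<zeta> = distr (P \<Otimes>\<^sub>M \<zeta>) borel (\<lambda>(y, n). y + n)"

lemma sets_add_noise [simp]: "sets (add_noise P \<zeta>) = sets borel"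
  by (simp add: add_noise_def)

lemma sets_slice [simp]: "sets (slice u P) = sets borel"
  by (simp add: slice_def)

lemma sets_shift_meas [simp]: "sets (shift_meas \<zeta> a) = sets borel"
  by (simp add: shift_meas_def)

lemma prob_space_add_noise:
  assumes "prob_space P" "sets P = sets borel" "prob_space \<zeta>" "sets \<zeta> = sets borel"
  shows "prob_space (add_noise P \<zeta>)"
proof -
  interpret pair_prob_space P \<zeta>
    using assms by (simp add: pair_prob_space_def pair_sigma_finite_def prob_space_imp_sigma_finite)
  have "(\<lambda>(y, n). y + n) \<in> borel_measurable (P \<Otimes>\<^sub>M \<zeta>)"
    unfolding measurable_cong_sets[OF sets_pair_measure_cong[OF assms(2,4)] refl] by measurable
  then show ?thesis
    unfolding add_noise_def by (rule prob_space_distr)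
qed

lemma prob_space_shift_meas:
  assumes "prob_space \<zeta>" "sets \<zeta> = sets borel"
  shows "prob_space (shift_meas \<zeta> a)"
  unfolding shift_meas_def
  using assms by (intro prob_space.prob_space_distr)
    (simp_all add: measurable_cong_sets[OF assms(2) refl])

lemma real_distribution_slice:
  assumes "prob_space P" "sets P = sets borel"
  shows "real_distribution (slice u P)"
proof -
  have "(\<lambda>a. inner a u) \<in> borel_measurable P"
    unfolding measurable_cong_sets[OF assms(2) refl] by measurable
  then show ?thesis
    unfolding slice_def by (rule prob_space.real_distribution_distr[OF assms(1)])
qed

lemma nn_integral_shift_meas:
  assumes "sets \<zeta> = sets borel" "h \<in> borel_measurable borel"
  shows "(\<integral>\<^sup>+ m. h m \<partial>shift_meas \<zeta> a) = (\<integral>\<^sup>+ n. h (n - a) \<partial>\<zeta>)"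
  unfolding shift_meas_def using assms
  by (subst nn_integral_distr) (simp_all add: measurable_cong_sets[OF assms(1) refl])

lemma borel_measurable_nn_integral_inner_shift:
  fixes \<zeta> :: "'a::euclidean_space measure"
  assumes "prob_space \<zeta>" "sets \<zeta> = sets borel" "F \<in> borel_measurable borel"
  shows "(\<lambda>s. \<integral>\<^sup>+ n. F (s + inner n u) \<partial>\<zeta>) \<in> borel_measurable borel"
proof -
  interpret prob_space \<zeta> by fact
  have "(\<lambda>(s, n). F (s + inner n u)) \<in> borel_measurable (borel \<Otimes>\<^sub>M \<zeta>)"
    unfolding measurable_cong_sets[OF sets_pair_measure_cong[OF refl assms(2)] refl]
    using assms(3) by measurable
  then show ?thesis
    by (rule borel_measurable_nn_integral)
qed

lemma nn_integral_slice_add_noise: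
  fixes P \<zeta> :: "'a::euclidean_space measure"
  assumes P: "prob_space P" "sets P = sets borel" and \<zeta>: "prob_space \<zeta>" "sets \<zeta> = sets borel"
    and F: "F \<in> borel_measurable borel"
  shows "(\<integral>\<^sup>+ s. F s \<partial>slice u (add_noise P \<zeta>)) = (\<integral>\<^sup>+ s. (\<integral>\<^sup>+ n. F (s + inner n u) \<partial>\<zeta>) \<partial>slice u P)"
proof -
  interpret \<zeta>: prob_space \<zeta> by fact
  have pair: "measurable (P \<Otimes>\<^sub>M \<zeta>) = measurable (borel \<Otimes>\<^sub>M borel)"
    by (rule measurable_cong_sets[OF sets_pair_measure_cong[OF P(2) \<zeta>(2)] refl, THEN ext])
  have "(\<integral>\<^sup>+ s. F s \<partial>slice u (add_noise P \<zeta>)) = (\<integral>\<^sup>+ z. F (inner (fst z + snd z) u) \<partial>(P \<Otimes>\<^sub>M \<zeta>))"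
    unfolding slice_def add_noise_def using F
    by (simp add: nn_integral_distr pair case_prod_beta)
  also have "\<dots> = (\<integral>\<^sup>+ y. (\<integral>\<^sup>+ n. F (inner y u + inner n u) \<partial>\<zeta>) \<partial>P)"
    using F by (subst \<zeta>.nn_integral_fst[symmetric]) (simp_all add: pair inner_add_left)
  also have "\<dots> = (\<integral>\<^sup>+ s. (\<integral>\<^sup>+ n. F (s + inner n u) \<partial>\<zeta>) \<partial>slice u P)"
    unfolding slice_def using borel_measurable_nn_integral_inner_shift[OF \<zeta> F]
    by (simp add: nn_integral_distr measurable_cong_sets[OF P(2) refl])
  finally show ?thesis .
qed

lemma nn_integral_inner_shift_le_if_young_bound:
  fixes u :: "'a::euclidean_space"
  assumes young: "young_bound \<alpha> C (shift_meas \<zeta> ((y - x) *\<^sub>R u)) \<zeta>" and u: "norm u = 1"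
    and \<zeta>: "sets \<zeta> = sets borel" and g: "g \<in> borel_measurable borel" "\<forall>s. 0 \<le> g s"
  shows "(\<integral>\<^sup>+ n. ennreal (g (x + inner n u)) \<partial>\<zeta>) \<le> ennreal (C / \<alpha>) +
    ennreal ((\<alpha> - 1) / \<alpha>) * (\<integral>\<^sup>+ n. ennreal (g (y + inner n u) powr (\<alpha> / (\<alpha> - 1))) \<partial>\<zeta>)"
proof -
  define h where "h m = g (y + inner m u)" for m
  have h: "h \<in> borel_measurable borel"
    unfolding h_def using g(1) by measurable
  have "inner u u = 1"
    using u by (simp add: power2_norm_eq_inner[symmetric])
  \<comment> \<open>shifting the noise by (y - x) u moves the slice from y to x\<close>
  then have "(\<integral>\<^sup>+ n. ennreal (g (x + inner n u)) \<partial>\<zeta>) = (\<integral>\<^sup>+ n. ennreal (h (n - (y - x) *\<^sub>R u)) \<partial>\<zeta>)"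
    by (simp add: h_def inner_diff_left algebra_simps)
  also have "\<dots> = (\<integral>\<^sup>+ m. ennreal (h m) \<partial>shift_meas \<zeta> ((y - x) *\<^sub>R u))"
    using h by (intro nn_integral_shift_meas[OF \<zeta>, symmetric]) measurable
  also have "\<dots> \<le> ennreal (C / \<alpha>) +
      ennreal ((\<alpha> - 1) / \<alpha>) * (\<integral>\<^sup>+ m. ennreal (h m powr (\<alpha> / (\<alpha> - 1))) \<partial>\<zeta>)"
    using young h g(2) \<zeta> unfolding young_bound_def h_def
    by (simp add: measurable_cong_sets[OF \<zeta> refl])
  finally show ?thesis
    by (simp add: h_def)
qed

lemma young_bound_slice_add_noise:
  fixes u :: "'a::euclidean_space"
  assumes u: "norm u = 1"
    and P1: "prob_space P1" "sets P1 = sets borel" and P2: "prob_space P2" "sets P2 = sets borel"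
    and \<zeta>: "prob_space \<zeta>" "sets \<zeta> = sets borel"
    and shifts: "\<And>a. ereal (norm a) \<le> W_inf (slice u P1) (slice u P2) \<Longrightarrow>
      young_bound \<alpha> C (shift_meas \<zeta> a) \<zeta>"
  shows "young_bound \<alpha> C (slice u (add_noise P1 \<zeta>)) (slice u (add_noise P2 \<zeta>))"
  unfolding young_bound_def
proof (intro ballI impI)
  let ?\<beta> = "\<alpha> / (\<alpha> - 1)" and ?\<Omega> = "restrict_space lborel {0<..<1::real}"
  fix g :: "real \<Rightarrow> real"
  assume "g \<in> borel_measurable (slice u (add_noise P2 \<zeta>))" and g0: "\<forall>s. 0 \<le> g s"
  then have g: "g \<in> borel_measurable borel"
    by (simp add: measurable_cong_sets[OF sets_slice refl])
  define G where "G x = (\<integral>\<^sup>+ n. ennreal (g (x + inner n u)) \<partial>\<zeta>)" for x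
  define K where "K x = (\<integral>\<^sup>+ n. ennreal (g (x + inner n u) powr ?\<beta>) \<partial>\<zeta>)" for x
  have GK: "G \<in> borel_measurable borel" "K \<in> borel_measurable borel"
    unfolding G_def K_def using g
    by (intro borel_measurable_nn_integral_inner_shift[OF \<zeta>]; measurable)+
  have \<nu>: "real_distribution (slice u P1)" and \<mu>: "real_distribution (slice u P2)"
    using P1 P2 by (simp_all add: real_distribution_slice)
  \<comment> \<open>the quantile coupling pairs points of the two slices at distance at most W_inf\<close>
  have pointwise: "G (quantile (slice u P1) t) \<le>
      ennreal (C / \<alpha>) + ennreal ((\<alpha> - 1) / \<alpha>) * K (quantile (slice u P2) t)"
    if "t \<in> space ?\<Omega>" for t
  proof -
    let ?x = "quantile (slice u P1) t" and ?y = "quantile (slice u P2) t"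
    have "ereal (norm ((?y - ?x) *\<^sub>R u)) \<le> W_inf (slice u P1) (slice u P2)"
      using quantile_dist_le_W_inf[OF \<nu> \<mu>] that u
      by (simp add: abs_minus_commute space_restrict_space)
    from nn_integral_inner_shift_le_if_young_bound[OF shifts[OF this] u \<zeta>(2) g g0]
    show ?thesis
      by (simp add: G_def K_def)
  qed
  have "(\<integral>\<^sup>+ s. g s \<partial>slice u (add_noise P1 \<zeta>)) = (\<integral>\<^sup>+ x. G x \<partial>slice u P1)"
    unfolding G_def using g by (intro nn_integral_slice_add_noise[OF P1 \<zeta>]) measurable
  also have "\<dots> = (\<integral>\<^sup>+ t. G (quantile (slice u P1) t) \<partial>?\<Omega>)"
    by (rule nn_integral_quantile[OF \<nu> GK(1)])
  also have "\<dots> \<le> (\<integral>\<^sup>+ t. ennreal (C / \<alpha>) + ennreal ((\<alpha> - 1) / \<alpha>) * K (quantile (slice u P2) t) \<partial>?\<Omega>)"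
    by (intro nn_integral_mono pointwise)
  also have "\<dots> = ennreal (C / \<alpha>) + ennreal ((\<alpha> - 1) / \<alpha>) * (\<integral>\<^sup>+ t. K (quantile (slice u P2) t) \<partial>?\<Omega>)"
    using GK distr_quantile(2)[OF \<mu>]
    by (simp add: nn_integral_add nn_integral_cmult emeasure_restrict_space space_restrict_space)
  also have "(\<integral>\<^sup>+ t. K (quantile (slice u P2) t) \<partial>?\<Omega>) = (\<integral>\<^sup>+ x. K x \<partial>slice u P2)"
    by (rule nn_integral_quantile[OF \<mu> GK(2), symmetric])
  also have "\<dots> = (\<integral>\<^sup>+ s. g s powr ?\<beta> \<partial>slice u (add_noise P2 \<zeta>))"
    unfolding K_def using g by (intro nn_integral_slice_add_noise[OF P2 \<zeta>, symmetric]) measurable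
  finally show "(\<integral>\<^sup>+ s. g s \<partial>slice u (add_noise P1 \<zeta>)) \<le> ennreal (C / \<alpha>) +
      ennreal ((\<alpha> - 1) / \<alpha>) * (\<integral>\<^sup>+ s. g s powr ?\<beta> \<partial>slice u (add_noise P2 \<zeta>))" .
qed

lemma prob_space_slice_add_noise:
  assumes "prob_space P" "sets P = sets borel" "prob_space \<zeta>" "sets \<zeta> = sets borel"
  shows "prob_space (slice u (add_noise P \<zeta>))"
  using real_distribution_slice[OF prob_space_add_noise[OF assms] sets_add_noise]
  by (simp add: real_distribution_def)

lemma renyi_div_slice_add_noise_le_R_shift:
  fixes u :: "'a::euclidean_space"
  assumes \<alpha>: "\<alpha> > 1" and u: "norm u = 1"
    and P1: "prob_space P1" "sets P1 = sets borel" and P2: "prob_space P2" "sets P2 = sets borel"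
    and \<zeta>: "prob_space \<zeta>" "sets \<zeta> = sets borel"
  shows "renyi_div \<alpha> (slice u (add_noise P1 \<zeta>)) (slice u (add_noise P2 \<zeta>))
    \<le> R_shift \<alpha> \<zeta> (W_inf (slice u P1) (slice u P2))"
proof (rule ereal_le_real)
  fix c assume R: "R_shift \<alpha> \<zeta> (W_inf (slice u P1) (slice u P2)) \<le> ereal c"
  have "young_bound \<alpha> (exp ((\<alpha> - 1) * c)) (shift_meas \<zeta> a) \<zeta>"
    if "ereal (norm a) \<le> W_inf (slice u P1) (slice u P2)" for a
  proof -
    have "renyi_div \<alpha> (shift_meas \<zeta> a) \<zeta> \<le> R_shift \<alpha> \<zeta> (W_inf (slice u P1) (slice u P2))"
      unfolding R_shift_def using that by (intro SUP_upper) simp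
    then have "renyi_div \<alpha> (shift_meas \<zeta> a) \<zeta> \<le> ereal c"
      using R by (rule order_trans)
    then show ?thesis
      using \<zeta> by (simp add: renyi_div_le_iff_young_bound[OF \<alpha> prob_space_shift_meas[OF \<zeta>]])
  qed
  then have "young_bound \<alpha> (exp ((\<alpha> - 1) * c))
      (slice u (add_noise P1 \<zeta>)) (slice u (add_noise P2 \<zeta>))"
    by (rule young_bound_slice_add_noise[OF u P1 P2 \<zeta>])
  then show "renyi_div \<alpha> (slice u (add_noise P1 \<zeta>)) (slice u (add_noise P2 \<zeta>)) \<le> ereal c"
    by (simp add: renyi_div_le_iff_young_bound[OF \<alpha>] prob_space_slice_add_noise P1 P2 \<zeta>)
qed

lemma AE_norm_eq_1_if_slice_profile:
  assumes "slice_profile U \<omega>"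
  shows "AE u in \<omega>. norm u = 1"
proof -
  interpret prob_space \<omega>
    using assms by (simp add: slice_profile_def)
  have U: "U \<in> sets \<omega>" "emeasure \<omega> U = 1" "U \<subseteq> sphere 0 1"
    using assms by (simp_all add: slice_profile_def)
  then have "AE u in \<omega>. u \<in> U"
    by (intro AE_prob_1) (simp add: emeasure_eq_measure)
  then show ?thesis
    by eventually_elim (use U(3) in auto)
qed

lemma AveSD_add_noise_le_AR_inf:
  assumes "\<alpha> > 1" "slice_profile U \<omega>"
    and "prob_space P1" "sets P1 = sets borel" "prob_space P2" "sets P2 = sets borel"
    and "prob_space \<zeta>" "sets \<zeta> = sets borel"
  shows "AveSD \<alpha> \<omega> (add_noise P1 \<zeta>) (add_noise P2 \<zeta>) \<le> AR_inf \<alpha> \<omega> \<zeta> P1 P2"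
  using AE_norm_eq_1_if_slice_profile[OF assms(2)]
    renyi_div_slice_add_noise_le_R_shift[OF assms(1) _ assms(3-)]
  unfolding AveSD_def AR_inf_def less_eq_ennreal.rep_eq[symmetric]
  by (intro nn_integral_mono_AE) (auto elim!: eventually_mono intro: e2ennreal_mono)

lemma ln_enn_mono: "x \<le> y \<Longrightarrow> ln_enn x \<le> ln_enn y"
proof (cases y rule: ennreal_cases)
  case (real r)
  then show "x \<le> y \<Longrightarrow> ?thesis"
    by (cases x rule: ennreal_cases) (auto simp: ln_enn_def top_unique)
qed (simp add: ln_enn_def)

lemma exp_ereal_mono: "x \<le> y \<Longrightarrow> exp_ereal x \<le> exp_ereal y"
  by (cases x; cases y) (auto simp: exp_ereal_def)

lemma JSD_add_noise_le_JR_inf: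
  assumes "\<alpha> > 1" "slice_profile U \<omega>"
    and "prob_space P1" "sets P1 = sets borel" "prob_space P2" "sets P2 = sets borel"
    and "prob_space \<zeta>" "sets \<zeta> = sets borel"
  shows "JSD \<alpha> \<omega> (add_noise P1 \<zeta>) (add_noise P2 \<zeta>) \<le> JR_inf \<alpha> \<omega> \<zeta> P1 P2"
  using AE_norm_eq_1_if_slice_profile[OF assms(2)]
    renyi_div_slice_add_noise_le_R_shift[OF assms(1) _ assms(3-)] assms(1)
  unfolding JSD_def JR_inf_def
  by (intro ereal_mult_left_mono ln_enn_mono nn_integral_mono_AE)
    (auto elim!: eventually_mono intro!: exp_ereal_mono ereal_mult_left_mono)

lemma prob_space_cond_secret:
  assumes "prob_space \<theta>" "{p \<in> space \<theta>. fst p = s} \<in> sets \<theta>" "secret_prob \<theta> s > 0"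
  shows "prob_space (cond_secret \<theta> s)"
proof (rule prob_spaceI)
  interpret prob_space \<theta> by fact
  let ?A = "{p \<in> space \<theta>. fst p = s}"
  have "(\<lambda>p. indicator ?A p / ennreal (secret_prob \<theta> s)) \<in> borel_measurable \<theta>"
    using assms(2) by measurable
  then have "emeasure (cond_secret \<theta> s) (space (cond_secret \<theta> s)) =
      (\<integral>\<^sup>+ p. indicator ?A p / ennreal (secret_prob \<theta> s) * indicator (space \<theta>) p \<partial>\<theta>)"
    unfolding cond_secret_def by (simp add: emeasure_density)
  also have "\<dots> = (\<integral>\<^sup>+ p. indicator ?A p / ennreal (secret_prob \<theta> s) \<partial>\<theta>)"
    by (intro nn_integral_cong) (auto simp: indicator_def)
  also have "\<dots> = emeasure \<theta> ?A / ennreal (secret_prob \<theta> s)"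
    using assms(2) by (simp add: nn_integral_divide)
  also have "\<dots> = 1"
    using assms(3) by (simp add: emeasure_eq_measure secret_prob_def divide_ennreal)
  finally show "emeasure (cond_secret \<theta> s) (space (cond_secret \<theta> s)) = 1" .
qed

lemma prob_space_query_law:
  assumes "prob_space \<theta>" "{p \<in> space \<theta>. fst p = s} \<in> sets \<theta>" "secret_prob \<theta> s > 0"
    and "(\<lambda>p. f (snd p)) \<in> borel_measurable \<theta>"
  shows "prob_space (query_law \<theta> f s)"
  unfolding query_law_def using assms(4)
  by (intro prob_space.prob_space_distr[OF prob_space_cond_secret[OF assms(1-3)]])
    (simp add: cond_secret_def)

lemma sets_query_law [simp]: "sets (query_law \<theta> f s) = sets borel"
  by (simp add: query_law_def)

theorem corollary1:
  fixes S :: "'s set" and Q :: "('s \<times> 's) set" and \<Theta> :: "('s \<times> 'x) measure set"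
    and U :: "'a::euclidean_space set" and \<omega> :: "'a measure" and \<zeta> :: "'a measure"
    and f :: "'x \<Rightarrow> 'a" and \<alpha> \<epsilon> :: real
  assumes scen: "pufferfish_scenario S Q \<Theta>"
    and fmeas: "\<forall>\<theta>\<in>\<Theta>. (\<lambda>p. f (snd p)) \<in> borel_measurable \<theta>"
    and prof: "slice_profile U \<omega>"
    and noise: "prob_space \<zeta>" "sets \<zeta> = sets borel"
    and alpha: "\<alpha> > 1" and eps: "\<epsilon> \<ge> 0"
  shows "((\<forall>\<theta>\<in>\<Theta>. \<forall>(si, sj)\<in>Q. secret_prob \<theta> si > 0 \<and> secret_prob \<theta> sj > 0 \<longrightarrow>
             AR_inf \<alpha> \<omega> \<zeta> (query_law \<theta> f si) (query_law \<theta> f sj) \<le> ereal \<epsilon>)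
          \<longrightarrow> Ave_SRPP \<alpha> \<epsilon> \<omega> S Q \<Theta> (\<lambda>\<theta> s. mech_law \<theta> f \<zeta> s))
       \<and> ((\<forall>\<theta>\<in>\<Theta>. \<forall>(si, sj)\<in>Q. secret_prob \<theta> si > 0 \<and> secret_prob \<theta> sj > 0 \<longrightarrow>
             JR_inf \<alpha> \<omega> \<zeta> (query_law \<theta> f si) (query_law \<theta> f sj) \<le> ereal \<epsilon>)
          \<longrightarrow> Joint_SRPP \<alpha> \<epsilon> \<omega> S Q \<Theta> (\<lambda>\<theta> s. mech_law \<theta> f \<zeta> s))"
proof -
  have law: "prob_space (query_law \<theta> f s)" if "\<theta> \<in> \<Theta>" "s \<in> S" "secret_prob \<theta> s > 0" for \<theta> s
    using scen fmeas that by (intro prob_space_query_law) (auto simp: pufferfish_scenario_def)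
  have mech: "mech_law \<theta> f \<zeta> s = add_noise (query_law \<theta> f s) \<zeta>" for \<theta> s
    by (simp add: mech_law_def add_noise_def)
  have "Q \<subseteq> S \<times> S"
    using scen by (simp add: pufferfish_scenario_def)
  then have "AveSD \<alpha> \<omega> (mech_law \<theta> f \<zeta> si) (mech_law \<theta> f \<zeta> sj)
      \<le> AR_inf \<alpha> \<omega> \<zeta> (query_law \<theta> f si) (query_law \<theta> f sj)"
    and "JSD \<alpha> \<omega> (mech_law \<theta> f \<zeta> si) (mech_law \<theta> f \<zeta> sj)
      \<le> JR_inf \<alpha> \<omega> \<zeta> (query_law \<theta> f si) (query_law \<theta> f sj)"
    if "\<theta> \<in> \<Theta>" "(si, sj) \<in> Q" "secret_prob \<theta> si > 0" "secret_prob \<theta> sj > 0" for \<theta> si sj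
    using that law unfolding mech
    by (auto intro!: AveSD_add_noise_le_AR_inf JSD_add_noise_le_JR_inf alpha prof noise)
  then show ?thesis
    unfolding Ave_SRPP_def Joint_SRPP_def by (fastforce intro: order_trans)
qed

end
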